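(* For every $w\in S_n$, the quotient groups $\mathfrak{ut}_n/\mathfrak{ut}_{w^{-1}}$ and $\mathfrak{ut}_n/\mathfrak{ut}_w$ are isomorphic.
   Context: Let $q$ be a prime power and $\mathfrak{ut}_n$ the additive group of strictly upper triangular $n\times n$ matrices over $\mathbb{F}_q$. For $w\in S_n$ (one-line notation), $\iota_k(w)=\#\{i<w^{-1}(k):w(i)>k\}$ and $\mathfrak{ut}_w=\{x\in\mathfrak{ut}_n:x_{ij}\ne0\Rightarrow0<j-i\le\iota_i(w)\}$, a subgroup of $\mathfrak{ut}_n$. *)

theory Defs
  imports "HOL-Algebra.Coset" "HOL-Combinatorics.Permutations"
begin

text \<open>n x n matrices over a field are encoded as functions nat => nat => 'a,
  with row/column indices 1..n (entries outside are zero for members of ut_n).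
  Permutations w in S_n are functions nat => nat with  w permutes {1..n}
  (one-line notation: w i is the i-th entry).\<close>

type_synonym 'a mat = "nat \<Rightarrow> nat \<Rightarrow> 'a"

definition iota :: "(nat \<Rightarrow> nat) \<Rightarrow> nat \<Rightarrow> nat" where
  "iota w k = card {i. 1 \<le> i \<and> i < Hilbert_Choice.inv w k \<and> w i > k}"

definition ut_carrier :: "nat \<Rightarrow> ('a::zero) mat set" where
  "ut_carrier n = {x. \<forall>i j. x i j \<noteq> 0 \<longrightarrow> 1 \<le> i \<and> i < j \<and> j \<le> n}"

definition ut_grp :: "nat \<Rightarrow> ('a::{field,finite}) mat monoid" where
  "ut_grp n = \<lparr>carrier = ut_carrier n,
               monoid.mult = (\<lambda>x y i j. x i j + y i j),
               one = (\<lambda>i j. 0)\<rparr>"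

definition ut_w :: "nat \<Rightarrow> (nat \<Rightarrow> nat) \<Rightarrow> ('a::zero) mat set" where
  "ut_w n w = {x \<in> ut_carrier n. \<forall>i j. x i j \<noteq> 0 \<longrightarrow> 0 < j - i \<and> j - i \<le> iota w i}"

end

(*
  ut_w consists of the matrices supported on the positions S_w = {(i,j). 0 < j - i <= iota_i(w)},
  and |S_w| = sum_k iota_k(w) is the number of inversions of w, which is also the number of
  inversions of w^-1. Hence some permutation of the positions of ut_n carries S_w onto S_(w^-1);
  permuting matrix entries accordingly is an automorphism of the additive group ut_n that
  identifies ut_w with ut_(w^-1), and it induces the isomorphism of quotients.
*)
theory Submission
  imports Defs
begin

lemma exists_permutes_image_eq:
  assumes "finite P" "S \<subseteq> P" "T \<subseteq> P" "card S = card T"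
  shows "\<exists>\<sigma>. \<sigma> permutes P \<and> \<sigma> ` S = T"
proof -
  have fin: "finite S" "finite T" using assms finite_subset by auto
  obtain f where f: "bij_betw f S T" using finite_same_card_bij[OF fin] assms(4) by blast
  have "card (P - S) = card (P - T)"
    using assms fin by (simp add: card_Diff_subset)
  then obtain g where g: "bij_betw g (P - S) (P - T)"
    using finite_same_card_bij assms(1) by (metis finite_Diff)
  define \<sigma> where "\<sigma> x = (if x \<in> S then f x else if x \<in> P then g x else x)" for x
  have ST: "bij_betw \<sigma> S T" using f by (rule bij_betw_cong[THEN iffD1, rotated]) (simp add: \<sigma>_def)
  moreover have "bij_betw \<sigma> (P - S) (P - T)"
    using g by (rule bij_betw_cong[THEN iffD1, rotated]) (simp add: \<sigma>_def)
  ultimately have "bij_betw \<sigma> (S \<union> (P - S)) (T \<union> (P - T))"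
    by (rule bij_betw_combine) blast
  with assms(2,3) have "\<sigma> permutes P"
    by (intro bij_imp_permutes) (auto simp: Un_absorb1 \<sigma>_def)
  with ST show ?thesis by (auto simp: bij_betw_def)
qed

lemma FactGroup_iso_vimage:
  assumes "group G" and "N \<lhd> G'" and "\<phi> \<in> hom G G'" and "\<phi> ` carrier G = carrier G'"
  shows "G Mod {x \<in> carrier G. \<phi> x \<in> N} \<cong> G' Mod N"
proof -
  interpret N: normal N G' by (rule assms(2))
  define h where "h x = N #>\<^bsub>G'\<^esub> \<phi> x" for x
  have "h \<in> hom G (G' Mod N)"
    using N.r_coset_hom_Mod assms(3) by (auto simp: h_def hom_def Pi_def)
  then interpret group_hom G "G' Mod N" h
    using assms(1) N.factorgroup_is_group by (simp add: group_hom_def group_hom_axioms_def)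
  have "h ` carrier G = carrier (G' Mod N)"
    by (simp add: carrier_FactGroup h_def image_image flip: assms(4))
  moreover have "kernel G (G' Mod N) h = {x \<in> carrier G. \<phi> x \<in> N}"
  proof -
    have "N #>\<^bsub>G'\<^esub> y = N \<longleftrightarrow> y \<in> N" if "y \<in> carrier G'" for y
      by (metis N.is_group N.rcos_const N.rcos_self N.subgroup_axioms that)
    then show ?thesis using assms(3) by (auto simp: kernel_def h_def hom_def)
  qed
  ultimately show ?thesis by (metis FactGroup_iso)
qed

definition mat_supp :: "('a::zero) mat \<Rightarrow> (nat \<times> nat) set" where
  "mat_supp x = {(i, j). x i j \<noteq> 0}"

definition ut_positions :: "nat \<Rightarrow> (nat \<times> nat) set" where
  "ut_positions n = {(i, j). 1 \<le> i \<and> i < j \<and> j \<le> n}"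

definition permute_entries :: "(nat \<times> nat \<Rightarrow> nat \<times> nat) \<Rightarrow> 'a mat \<Rightarrow> 'a mat" where
  "permute_entries \<sigma> x = (\<lambda>i j. case_prod x (\<sigma> (i, j)))"

lemma finite_ut_positions: "finite (ut_positions n)"
  by (rule finite_subset[of _ "{1..n} \<times> {1..n}"]) (auto simp: ut_positions_def)

lemma ut_carrier_eq: "ut_carrier n = {x. mat_supp x \<subseteq> ut_positions n}"
  by (auto simp: ut_carrier_def mat_supp_def ut_positions_def)

lemma mat_supp_add:
  "mat_supp (\<lambda>i j. x i j + y i j) \<subseteq> mat_supp x \<union> mat_supp (y :: ('a::monoid_add) mat)"
  by (auto simp: mat_supp_def)

lemma mat_supp_uminus [simp]: "mat_supp (\<lambda>i j. - x i j) = mat_supp (x :: ('a::group_add) mat)"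
  by (simp add: mat_supp_def)

lemma mat_supp_permute_entries: "mat_supp (permute_entries \<sigma> x) = \<sigma> -` mat_supp x"
  by (auto simp: mat_supp_def permute_entries_def split: prod.splits)

lemma permute_entries_comp:
  "permute_entries \<sigma> (permute_entries \<tau> x) = permute_entries (\<tau> \<circ> \<sigma>) x"
  by (simp add: permute_entries_def)

lemma permute_entries_id [simp]: "permute_entries id x = x"
  by (simp add: permute_entries_def)

lemma permute_entries_supported_iff:
  assumes "bij \<sigma>"
  shows "mat_supp (permute_entries \<sigma> x) \<subseteq> T \<longleftrightarrow> mat_supp x \<subseteq> \<sigma> ` T"
  unfolding mat_supp_permute_entries
  by (metis assms bij_is_inj bij_is_surj inj_image_subset_iff surj_image_vimage_eq)

lemma ut_comm_group: "comm_group (ut_grp n :: ('a::{field,finite}) mat monoid)"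
proof (rule comm_groupI)
  fix x y :: "'a mat"
  assume "x \<in> carrier (ut_grp n)" "y \<in> carrier (ut_grp n)"
  then show "x \<otimes>\<^bsub>ut_grp n\<^esub> y \<in> carrier (ut_grp n)"
    using mat_supp_add[of x y] by (auto simp: ut_grp_def ut_carrier_eq)
next
  fix x :: "'a mat" assume "x \<in> carrier (ut_grp n)"
  then show "\<exists>y\<in>carrier (ut_grp n). y \<otimes>\<^bsub>ut_grp n\<^esub> x = \<one>\<^bsub>ut_grp n\<^esub>"
    by (intro bexI[of _ "\<lambda>i j. - x i j"]) (simp_all add: ut_grp_def ut_carrier_eq)
qed (simp_all add: ut_grp_def ut_carrier_eq mat_supp_def ac_simps)

lemma supported_subgroup:
  assumes "S \<subseteq> ut_positions n"
  shows "subgroup {x. mat_supp x \<subseteq> S} (ut_grp n :: ('a::{field,finite}) mat monoid)"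
proof -
  interpret comm_group "ut_grp n :: 'a mat monoid" by (rule ut_comm_group)
  have inv: "inv\<^bsub>ut_grp n\<^esub> x = (\<lambda>i j. - x i j)"
    if "x \<in> carrier (ut_grp n)" for x :: "'a mat"
    by (rule inv_equality) (use that in \<open>simp_all add: ut_grp_def ut_carrier_eq\<close>)
  show ?thesis
  proof
    fix x y :: "'a mat"
    assume "x \<in> {x. mat_supp x \<subseteq> S}" "y \<in> {x. mat_supp x \<subseteq> S}"
    then show "x \<otimes>\<^bsub>ut_grp n\<^esub> y \<in> {x. mat_supp x \<subseteq> S}"
      using mat_supp_add[of x y] by (auto simp: ut_grp_def)
  next
    show sub: "{x. mat_supp x \<subseteq> S} \<subseteq> carrier (ut_grp n :: 'a mat monoid)"
      using assms by (auto simp: ut_grp_def ut_carrier_eq)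
    fix x :: "'a mat" assume x: "x \<in> {x. mat_supp x \<subseteq> S}"
    with sub have "x \<in> carrier (ut_grp n)" by blast
    with x show "inv\<^bsub>ut_grp n\<^esub> x \<in> {x. mat_supp x \<subseteq> S}"
      by (simp add: inv)
  qed (simp add: ut_grp_def mat_supp_def)
qed

lemma permute_entries_hom:
  assumes "\<sigma> permutes ut_positions n"
  shows "permute_entries \<sigma> \<in> hom (ut_grp n) (ut_grp n :: ('a::{field,finite}) mat monoid)"
proof (rule homI)
  fix x :: "'a mat" assume "x \<in> carrier (ut_grp n)"
  then show "permute_entries \<sigma> x \<in> carrier (ut_grp n)"
    using permutes_vimage[OF assms]
    by (auto simp: ut_grp_def ut_carrier_eq mat_supp_permute_entries)
qed (simp add: ut_grp_def permute_entries_def case_prod_beta)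

lemma permute_entries_image:
  assumes "\<sigma> permutes ut_positions n"
  shows "permute_entries \<sigma> ` carrier (ut_grp n) =
    carrier (ut_grp n :: ('a::{field,finite}) mat monoid)"
proof
  let ?\<tau> = "Hilbert_Choice.inv \<sigma>"
  have closed: "permute_entries \<rho> ` carrier (ut_grp n) \<subseteq> carrier (ut_grp n :: 'a mat monoid)"
    if "\<rho> permutes ut_positions n" for \<rho>
    using permute_entries_hom[OF that] by (auto simp: hom_def)
  then show "permute_entries \<sigma> ` carrier (ut_grp n) \<subseteq> carrier (ut_grp n :: 'a mat monoid)"
    using assms .
  have "x = permute_entries \<sigma> (permute_entries ?\<tau> x)" for x :: "'a mat"
    by (simp add: permute_entries_comp permutes_inv_o(2)[OF assms])
  then show "carrier (ut_grp n) \<subseteq> permute_entries \<sigma> ` carrier (ut_grp n :: 'a mat monoid)"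
    using closed[OF permutes_inv[OF assms]] by blast
qed

definition inversions :: "nat \<Rightarrow> (nat \<Rightarrow> nat) \<Rightarrow> (nat \<times> nat) set" where
  "inversions n w = {(i, j). 1 \<le> i \<and> i < j \<and> j \<le> n \<and> w j < w i}"

definition ut_w_positions :: "nat \<Rightarrow> (nat \<Rightarrow> nat) \<Rightarrow> (nat \<times> nat) set" where
  "ut_w_positions n w = {(i, j). 1 \<le> i \<and> i < j \<and> j \<le> n \<and> j - i \<le> iota w i}"

lemma ut_w_positions_subset: "ut_w_positions n w \<subseteq> ut_positions n"
  by (auto simp: ut_w_positions_def ut_positions_def)

lemma ut_w_eq: "ut_w n w = {x. mat_supp x \<subseteq> ut_w_positions n w}"
  by (auto simp: ut_w_def ut_carrier_def mat_supp_def ut_w_positions_def)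

lemma iota_le:
  assumes w: "w permutes {1..n}" and k: "k \<in> {1..n}"
  shows "iota w k \<le> n - k"
proof -
  let ?A = "{i. 1 \<le> i \<and> i < Hilbert_Choice.inv w k \<and> k < w i}"
  have "Hilbert_Choice.inv w k \<in> {1..n}"
    using permutes_in_image[OF permutes_inv[OF w]] k by blast
  then have "w ` ?A \<subseteq> {k<..n}"
    using permutes_in_image[OF w] by fastforce
  moreover have "inj_on w ?A"
    using permutes_inj[OF w] by (auto intro: inj_on_subset)
  ultimately have "card ?A \<le> card {k<..n}"
    by (metis card_image card_mono finite_greaterThanAtMost)
  then show ?thesis by (simp add: iota_def)
qed

lemma card_ut_w_positions:
  assumes "w permutes {1..n}"
  shows "card (ut_w_positions n w) = (\<Sum>k\<in>{1..n}. iota w k)"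
proof -
  have "ut_w_positions n w = (SIGMA k:{1..n}. {k<..k + iota w k})"
    using iota_le[OF assms] by (fastforce simp: ut_w_positions_def)
  then show ?thesis by simp
qed

lemma card_inversions:
  assumes w: "w permutes {1..n}"
  shows "card (inversions n w) = (\<Sum>k\<in>{1..n}. iota w k)"
proof -
  let ?B = "\<lambda>j. {i. 1 \<le> i \<and> i < j \<and> w j < w i}"
  have "inversions n w = prod.swap ` (SIGMA j:{1..n}. ?B j)"
    by (force simp: inversions_def)
  then have "card (inversions n w) = card (SIGMA j:{1..n}. ?B j)"
    by (simp add: card_image swap_inj_on)
  also have "\<dots> = (\<Sum>j\<in>{1..n}. card (?B j))"
    by (rule card_SigmaI) (auto intro: finite_subset[of _ "{..<_}"])
  also have "\<dots> = (\<Sum>j\<in>{1..n}. iota w (w j))"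
    by (simp add: iota_def permutes_inverses(2)[OF w])
  also have "\<dots> = (\<Sum>k\<in>{1..n}. iota w k)"
    using sum.permute[OF w, of "iota w"] by (simp add: comp_def)
  finally show ?thesis .
qed

lemma card_inversions_le_inv:
  assumes w: "w permutes {1..n}"
  shows "card (inversions n w) \<le> card (inversions n (Hilbert_Choice.inv w))"
proof (rule card_inj_on_le)
  show "inj_on (\<lambda>(i, j). (w j, w i)) (inversions n w)"
    using permutes_inj[OF w] by (auto simp: inj_on_def dest: injD)
  show "(\<lambda>(i, j). (w j, w i)) ` inversions n w \<subseteq> inversions n (Hilbert_Choice.inv w)"
  proof clarify
    fix i j assume "(i, j) \<in> inversions n w"
    then have "1 \<le> i" "i < j" "j \<le> n" "w j < w i" by (simp_all add: inversions_def)
    moreover have "w i \<in> {1..n}" "w j \<in> {1..n}"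
      using permutes_in_image[OF w] \<open>1 \<le> i\<close> \<open>i < j\<close> \<open>j \<le> n\<close> by simp_all
    ultimately show "(w j, w i) \<in> inversions n (Hilbert_Choice.inv w)"
      by (simp add: inversions_def permutes_inverses(2)[OF w])
  qed
  show "finite (inversions n (Hilbert_Choice.inv w))"
    by (rule finite_subset[of _ "{1..n} \<times> {1..n}"]) (auto simp: inversions_def)
qed

lemma card_ut_w_positions_inv:
  assumes w: "w permutes {1..n}"
  shows "card (ut_w_positions n (Hilbert_Choice.inv w)) = card (ut_w_positions n w)"
proof -
  have w': "Hilbert_Choice.inv w permutes {1..n}" by (rule permutes_inv[OF w])
  have "card (ut_w_positions n (Hilbert_Choice.inv w)) =
      card (inversions n (Hilbert_Choice.inv w))"
    by (simp only: card_ut_w_positions[OF w'] card_inversions[OF w'])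
  also have "\<dots> = card (inversions n w)"
    using card_inversions_le_inv[OF w] card_inversions_le_inv[OF w']
    by (simp add: permutes_inv_inv[OF w])
  also have "\<dots> = card (ut_w_positions n w)"
    by (simp only: card_ut_w_positions[OF w] card_inversions[OF w])
  finally show ?thesis .
qed

theorem proposition3p4:
  fixes w :: "nat \<Rightarrow> nat" and n :: nat
  assumes "w permutes {1..n}"
  shows "((ut_grp n :: ('a::{field,finite}) mat monoid) Mod ut_w n (Hilbert_Choice.inv w))
           \<cong> ((ut_grp n :: 'a mat monoid) Mod ut_w n w)"
proof -
  let ?G = "ut_grp n :: 'a mat monoid"
  interpret comm_group ?G by (rule ut_comm_group)
  obtain \<sigma> where \<sigma>: "\<sigma> permutes ut_positions n"
    and \<sigma>_image: "\<sigma> ` ut_w_positions n w = ut_w_positions n (Hilbert_Choice.inv w)"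
    using exists_permutes_image_eq[OF finite_ut_positions ut_w_positions_subset
        ut_w_positions_subset card_ut_w_positions_inv[OF assms, symmetric]] by blast
  have normal: "ut_w n w \<lhd> ?G"
    by (simp add: subgroup_imp_normal supported_subgroup ut_w_positions_subset ut_w_eq)
  have vimage:
    "{x \<in> carrier ?G. permute_entries \<sigma> x \<in> ut_w n w} = ut_w n (Hilbert_Choice.inv w)"
    using subgroup.subset[OF supported_subgroup[OF ut_w_positions_subset]]
    by (auto simp: ut_w_eq permute_entries_supported_iff[OF permutes_bij[OF \<sigma>]] \<sigma>_image)
  show ?thesis
    using FactGroup_iso_vimage[OF is_group normal
        permute_entries_hom[OF \<sigma>] permute_entries_image[OF \<sigma>]]
    unfolding vimage .
qed

end
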